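(* Let $k\ge0$ and let $n$ be a positive integer of length $l$ with $k(n)\le k$. Then $$\sum_{\substack{m:\ \mathrm{ld}_l(m)=n\\ k(m)=k}}\frac1m=\sum_{m=0}^{\infty}(-1)^m\frac{u_{k-k(n);m}}{n^{m+1}}.$$
   Context: Fix $b\ge2$ and $d\in\{0,\dots,b-1\}$. For an integer $n\ge0$, its length $l(n)$ is the smallest $l\ge0$ with $n<b^l$, and $k(n)$ is the number of occurrences of $d$ in its base-$b$ representation without leading zeros. For $m>0$ of length $q\ge l$, $\mathrm{ld}_l(m)=\lfloor m/b^{q-l}\rfloor$ (the sum on the left runs over positive integers $m$ of length $\ge l$). A string is a finite sequence $X=(d_l,\dots,d_1)$ of digits in $\{0,\dots,b-1\}$ (leading zeros allowed), of length $|X|=l\ge0$; its value is $n(X)=\sum_{i=1}^{l}d_ib^{i-1}$ ($0$ for the empty string). For $k\ge0$, $\mu_k=\sum_{X}b^{-|X|}\delta_{n(X)/b^{|X|}}$, the sum over all strings $X$ containing $d$ exactly $k$ times; it is a finite measure on $[0,1)$ of total mass $b$. The moments are $u_{k;m}=\int_{[0,1)}x^m\,d\mu_k(x)$ (with $0^0=1$). *)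

theory Defs
  imports "HOL-Analysis.Analysis"
begin

definition blen :: "nat \<Rightarrow> nat \<Rightarrow> nat" where
  "blen b n = (LEAST l. n < b ^ l)"

definition kcount :: "nat \<Rightarrow> nat \<Rightarrow> nat \<Rightarrow> nat" where
  "kcount b d n = card {i. i < blen b n \<and> (n div b ^ i) mod b = d}"

definition ld :: "nat \<Rightarrow> nat \<Rightarrow> nat \<Rightarrow> nat" where
  "ld b l m = m div b ^ (blen b m - l)"

text \<open>Strings: lists of digits, most significant digit first. Value n(X).\<close>
definition strval :: "nat \<Rightarrow> nat list \<Rightarrow> nat" where
  "strval b X = foldl (\<lambda>a x. a * b + x) 0 X"

definition strings :: "nat \<Rightarrow> nat \<Rightarrow> nat \<Rightarrow> nat list set" where
  "strings b d k = {X. set X \<subseteq> {..<b} \<and> count_list X d = k}"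

text \<open>Moments u_{k;m} = integral of x^m d mu_k, mu_k = sum b^{-|X|} delta_{n(X)/b^|X|}.\<close>
definition umom :: "nat \<Rightarrow> nat \<Rightarrow> nat \<Rightarrow> nat \<Rightarrow> real" where
  "umom b d k m = (\<Sum>\<^sub>\<infinity> X \<in> strings b d k.
      (1 / real b ^ length X) * (real (strval b X) / real b ^ length X) ^ m)"

end

(*
  A number m with leading block n and k(m) = k is exactly n followed by a string X containing d
  k - k(n) times, i.e. m = b^|X| (n + x) with x = n(X)/b^|X| in [0,1). Hence the left-hand side
  is the integral of 1/(n + x) against mu_{k-k(n)}. Expanding 1/(n + x) = sum_j (-1)^j x^j / n^(j+1),
  the N-th partial sum of the moment series differs from this integral by at most the N-th moment
  u_{k-k(n);N}, and these moments tend to 0 because mu_{k-k(n)} is finite and lives on [0,1).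
*)
theory Submission
  imports Defs
begin

text \<open>Unlike \<open>kcount\<close>, this counts among a fixed number \<open>L\<close> of lowest digits, leading zeros
  included, which makes it additive under concatenation.\<close>
definition digit_count :: "nat \<Rightarrow> nat \<Rightarrow> nat \<Rightarrow> nat \<Rightarrow> nat" where
  "digit_count b d L v = card {i. i < L \<and> (v div b ^ i) mod b = d}"

lemma kcount_eq_digit_count: "kcount b d n = digit_count b d (blen b n) n"
  unfolding kcount_def digit_count_def ..

lemma digit_shift_add_low:
  fixes a b c :: nat
  assumes "b > 0" "i < L"
  shows "((a * b ^ L + c) div b ^ i) mod b = (c div b ^ i) mod b"
proof -
  obtain t where t: "L = Suc (t + i)"
    using assms(2) by (metis add.commute less_iff_Suc_add)
  have eq: "a * b ^ L + c = c + (a * b ^ t * b) * b ^ i"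
    unfolding t by (simp add: power_add mult_ac)
  have "(a * b ^ L + c) div b ^ i = c div b ^ i + a * b ^ t * b"
    unfolding eq using assms(1) by simp
  then show ?thesis by simp
qed

lemma div_power_shift_add:
  fixes a b c :: nat
  assumes "b > 0" "c < b ^ L"
  shows "(a * b ^ L + c) div b ^ (L + j) = a div b ^ j"
proof -
  have "(a * b ^ L + c) div b ^ L = a"
    using assms by (simp add: add.commute)
  then show ?thesis by (simp add: power_add div_mult2_eq)
qed

lemma digit_count_shift_add:
  assumes "b > 0" "c < b ^ L2"
  shows "digit_count b d (L1 + L2) (a * b ^ L2 + c) = digit_count b d L1 a + digit_count b d L2 c"
proof -
  let ?D = "\<lambda>v. {i. (v div b ^ i) mod b = d}"
  have split: "{..<L1 + L2} \<inter> ?D (a * b ^ L2 + c) = {..<L2} \<inter> ?D c \<union> (\<lambda>j. L2 + j) ` ({..<L1} \<inter> ?D a)"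
  proof (intro set_eqI iffI)
    fix i assume i: "i \<in> {..<L1 + L2} \<inter> ?D (a * b ^ L2 + c)"
    show "i \<in> {..<L2} \<inter> ?D c \<union> (\<lambda>j. L2 + j) ` ({..<L1} \<inter> ?D a)"
    proof (cases "i < L2")
      case True
      then show ?thesis using i digit_shift_add_low[OF assms(1) True, of a c] by auto
    next
      case False
      then obtain j where "i = L2 + j" by (metis le_add_diff_inverse not_less)
      then show ?thesis using i div_power_shift_add[OF assms, of a j] by auto
    qed
  qed (use digit_shift_add_low[OF assms(1), of _ L2 a c] div_power_shift_add[OF assms, of a] in auto)
  have count: "digit_count b d L v = card ({..<L} \<inter> ?D v)" for L v
    unfolding digit_count_def by (simp add: lessThan_def Collect_conj_eq)
  have "card ({..<L2} \<inter> ?D c \<union> (\<lambda>j. L2 + j) ` ({..<L1} \<inter> ?D a))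
      = card ({..<L2} \<inter> ?D c) + card ({..<L1} \<inter> ?D a)"
    by (subst card_Un_disjoint) (auto simp: card_image)
  then show ?thesis unfolding count split by simp
qed

lemma digit_count_single: "x < b \<Longrightarrow> digit_count b d 1 x = (if x = d then 1 else 0)"
proof -
  assume "x < b"
  then have "{i. i < 1 \<and> (x div b ^ i) mod b = d} = (if x = d then {0} else {})" by auto
  then show ?thesis unfolding digit_count_def by simp
qed

lemma strval_Nil [simp]: "strval b [] = 0"
  by (simp add: strval_def)

lemma strval_snoc [simp]: "strval b (X @ [x]) = strval b X * b + x"
  by (simp add: strval_def)

lemma strval_less: "set X \<subseteq> {..<b} \<Longrightarrow> strval b X < b ^ length X"
proof (induction X rule: rev_induct)
  case (snoc x X)
  then have "strval b X + 1 \<le> b ^ length X" "x < b" by auto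
  then have "strval b X * b + x < (strval b X + 1) * b" by simp
  also have "\<dots> \<le> b ^ length X * b"
    using \<open>strval b X + 1 \<le> b ^ length X\<close> by (intro mult_right_mono) simp_all
  finally show ?case by (simp add: mult.commute)
qed simp

lemma digit_count_strval:
  "b > 0 \<Longrightarrow> set X \<subseteq> {..<b} \<Longrightarrow> digit_count b d (length X) (strval b X) = count_list X d"
proof (induction X rule: rev_induct)
  case Nil
  then show ?case by (simp add: digit_count_def)
next
  case (snoc x X)
  then have "digit_count b d (length X + 1) (strval b X * b ^ 1 + x)
      = digit_count b d (length X) (strval b X) + digit_count b d 1 x"
    by (intro digit_count_shift_add) auto
  then show ?case using snoc digit_count_single[of x b d] by simp
qed

fun digit_list :: "nat \<Rightarrow> nat \<Rightarrow> nat \<Rightarrow> nat list" where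
  "digit_list b 0 r = []"
| "digit_list b (Suc L) r = digit_list b L (r div b) @ [r mod b]"

lemma length_digit_list [simp]: "length (digit_list b L r) = L"
  by (induction L arbitrary: r) auto

lemma set_digit_list: "b > 0 \<Longrightarrow> set (digit_list b L r) \<subseteq> {..<b}"
  by (induction L arbitrary: r) auto

lemma strval_digit_list: "strval b (digit_list b L r) = r mod b ^ L"
  by (induction L arbitrary: r) (auto simp: mod_mult2_eq mult.commute)

lemma digit_list_strval: "set X \<subseteq> {..<b} \<Longrightarrow> digit_list b (length X) (strval b X) = X"
  by (induction X rule: rev_induct) auto

lemma blen_less: "b \<ge> 2 \<Longrightarrow> n < b ^ blen b n"
  unfolding blen_def by (rule LeastI[of _ n]) (metis less_exp order_less_le_trans power_mono zero_le_numeral)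

lemma blen_le: "l < blen b n \<Longrightarrow> b ^ l \<le> n"
  unfolding blen_def using not_less_Least by (metis not_le)

lemma blen_eqI: "n < b ^ q \<Longrightarrow> (\<And>l. l < q \<Longrightarrow> b ^ l \<le> n) \<Longrightarrow> blen b n = q"
  unfolding blen_def by (rule Least_equality) (auto simp: not_le[symmetric])

lemma
  assumes b: "b \<ge> 2" and n: "n > 0" and v: "v < b ^ L"
  shows blen_shift_add: "blen b (n * b ^ L + v) = blen b n + L"
    and kcount_shift_add: "kcount b d (n * b ^ L + v) = kcount b d n + digit_count b d L v"
proof -
  let ?l = "blen b n"
  have "?l > 0" using blen_less[OF b, of n] n by (cases ?l) auto
  then have lower: "b ^ (?l - 1) \<le> n" by (intro blen_le) simp
  have "n * b ^ L + v < (n + 1) * b ^ L" using v by simp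
  also have "\<dots> \<le> b ^ ?l * b ^ L" using blen_less[OF b, of n] by (intro mult_right_mono) auto
  finally have "n * b ^ L + v < b ^ (?l + L)" by (simp add: power_add)
  moreover have "b ^ j \<le> n * b ^ L + v" if "j < ?l + L" for j
  proof -
    have "b ^ j \<le> b ^ (?l - 1) * b ^ L"
      using that b by (simp add: power_add[symmetric] power_increasing)
    also have "\<dots> \<le> n * b ^ L" using lower by simp
    finally show ?thesis by simp
  qed
  ultimately show bl: "blen b (n * b ^ L + v) = ?l + L" by (rule blen_eqI)
  show "kcount b d (n * b ^ L + v) = kcount b d n + digit_count b d L v"
    unfolding kcount_eq_digit_count bl using digit_count_shift_add[of b v L d ?l n] b v by simp
qed

section \<open>The numbers with leading block n correspond to strings\<close>

definition append_digits :: "nat \<Rightarrow> nat \<Rightarrow> nat list \<Rightarrow> nat" where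
  "append_digits b n X = n * b ^ length X + strval b X"

lemma inj_on_append_digits:
  assumes b: "b \<ge> 2" and n: "n > 0"
  shows "inj_on (append_digits b n) {X. set X \<subseteq> {..<b}}"
proof (rule inj_onI)
  fix X Y assume X: "X \<in> {X. set X \<subseteq> {..<b}}" and Y: "Y \<in> {X. set X \<subseteq> {..<b}}"
    and eq: "append_digits b n X = append_digits b n Y"
  have "length X = length Y"
    using eq blen_shift_add[OF b n strval_less] X Y unfolding append_digits_def
    by (metis add_left_cancel mem_Collect_eq)
  moreover from this have "strval b X = strval b Y"
    using eq unfolding append_digits_def by simp
  ultimately show "X = Y"
    using digit_list_strval X Y by (metis mem_Collect_eq)
qed

lemma append_digits_image:
  assumes b: "b \<ge> 2" and n: "n > 0" and k: "kcount b d n \<le> k"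
  shows "append_digits b n ` strings b d (k - kcount b d n)
       = {m. m > 0 \<and> blen b m \<ge> blen b n \<and> ld b (blen b n) m = n \<and> kcount b d m = k}"
    (is "?image = ?M")
proof (intro set_eqI iffI)
  fix m assume "m \<in> ?image"
  then obtain X where X: "set X \<subseteq> {..<b}" "count_list X d = k - kcount b d n"
    and m: "m = n * b ^ length X + strval b X"
    unfolding strings_def append_digits_def by auto
  note less = strval_less[OF X(1)]
  have bl: "blen b m = blen b n + length X"
    unfolding m by (rule blen_shift_add[OF b n less])
  have "kcount b d m = k"
    using kcount_shift_add[OF b n less, of d] digit_count_strval[OF _ X(1), of d] X(2) k b
    unfolding m by simp
  moreover have "ld b (blen b n) m = n"
    unfolding ld_def bl using less b by (simp add: m)
  ultimately show "m \<in> ?M" using bl m n b by simp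
next
  fix m assume "m \<in> ?M"
  then have lead: "m div b ^ (blen b m - blen b n) = n" and km: "kcount b d m = k"
    unfolding ld_def by auto
  define L where "L = blen b m - blen b n"
  define X where "X = digit_list b L (m mod b ^ L)"
  have X: "set X \<subseteq> {..<b}" unfolding X_def using set_digit_list b by simp
  have m: "m = n * b ^ length X + strval b X"
    using div_mult_mod_eq[of m "b ^ L"] lead unfolding X_def L_def by (simp add: strval_digit_list)
  have "kcount b d m = kcount b d n + count_list X d"
    using kcount_shift_add[OF b n strval_less[OF X], of d] digit_count_strval[OF _ X, of d] b
    by (simp add: m[symmetric])
  then have "X \<in> strings b d (k - kcount b d n)"
    unfolding strings_def using X km by simp
  then show "m \<in> ?image" unfolding append_digits_def using m by blast
qed

lemma real_append_digits:
  "b > 0 \<Longrightarrow> real (append_digits b n X)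
     = real b ^ length X * (real n + real (strval b X) / real b ^ length X)"
  unfolding append_digits_def by (simp add: field_simps)

definition strings_of_length :: "nat \<Rightarrow> nat \<Rightarrow> nat list set" where
  "strings_of_length b L = {X. set X \<subseteq> {..<b} \<and> length X = L}"

lemma finite_strings_of_length: "finite (strings_of_length b L)"
  unfolding strings_of_length_def by (rule finite_lists_length_eq) simp

lemma strings_of_length_Suc:
  "strings_of_length b (Suc L) = (\<lambda>(x, X). x # X) ` ({..<b} \<times> strings_of_length b L)"
  unfolding strings_of_length_def by (auto simp: length_Suc_conv image_def)

lemma sum_strings_of_length:
  fixes q :: real
  assumes "d < b"
  shows "(\<Sum>X\<in>strings_of_length b L. q ^ count_list X d / real b ^ L) = ((real b - 1 + q) / real b) ^ L"
proof (induction L)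
  case 0
  have "strings_of_length b 0 = {[]}" unfolding strings_of_length_def by auto
  then show ?case by simp
next
  case (Suc L)
  let ?w = "\<lambda>x. (if x = d then q else 1) / real b"
  have digit: "(\<Sum>x<b. ?w x) = (real b - 1 + q) / real b"
    using assms by (simp add: sum_divide_distrib[symmetric] sum.If_cases of_nat_diff
        Diff_eq[symmetric] card_Diff_singleton)
  have "(\<Sum>X\<in>strings_of_length b (Suc L). q ^ count_list X d / real b ^ Suc L)
      = (\<Sum>(x, X)\<in>{..<b} \<times> strings_of_length b L. ?w x * (q ^ count_list X d / real b ^ L))"
    unfolding strings_of_length_Suc
    by (subst sum.reindex) (auto simp: inj_on_def intro!: sum.cong)
  also have "\<dots> = (\<Sum>x<b. \<Sum>X\<in>strings_of_length b L. ?w x * (q ^ count_list X d / real b ^ L))"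
    by (simp add: sum.cartesian_product)
  also have "\<dots> = (\<Sum>x<b. ?w x) * (\<Sum>X\<in>strings_of_length b L. q ^ count_list X d / real b ^ L)"
    by (simp add: sum_product)
  finally show ?case using Suc digit by simp
qed

text \<open>Discounting each occurrence of \<open>d\<close> by \<open>q < 1\<close> makes the total weight of the strings of
  length \<open>L\<close> geometric in \<open>L\<close>; on strings with exactly \<open>K\<close> occurrences the discount is constant.\<close>
lemma summable_on_strings_weight:
  fixes q :: real
  assumes "d < b" "0 \<le> q" "q < 1"
  shows "(\<lambda>X. q ^ count_list X d / real b ^ length X) summable_on {X. set X \<subseteq> {..<b}}"
proof (rule nonneg_bdd_above_summable_on)
  let ?w = "\<lambda>X. q ^ count_list X d / real b ^ length X"
  let ?r = "(real b - 1 + q) / real b"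
  have r: "0 \<le> ?r" "?r < 1" using assms by (auto simp: field_simps)
  show "bdd_above (sum ?w ` {F. F \<subseteq> {X. set X \<subseteq> {..<b}} \<and> finite F})"
  proof (rule bdd_aboveI2)
    fix F assume F: "F \<in> {F. F \<subseteq> {X. set X \<subseteq> {..<b}} \<and> finite F}"
    define N where "N = Suc (Max (insert 0 (length ` F)))"
    have "F \<subseteq> (\<Union>L<N. strings_of_length b L)"
      using F by (auto simp: N_def strings_of_length_def le_imp_less_Suc)
    then have "sum ?w F \<le> sum ?w (\<Union>L<N. strings_of_length b L)"
      using assms(2) by (intro sum_mono2) (auto simp: finite_strings_of_length)
    also have "\<dots> = (\<Sum>L<N. sum ?w (strings_of_length b L))"
      using finite_strings_of_length by (intro sum.UNION_disjoint) (auto simp: strings_of_length_def)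
    also have "\<dots> = (\<Sum>L<N. ?r ^ L)"
      using sum_strings_of_length[OF assms(1)] by (simp add: strings_of_length_def)
    also have "\<dots> = (1 - ?r ^ N) / (1 - ?r)" using r assms(3) by (simp add: sum_gp_strict)
    also have "\<dots> \<le> 1 / (1 - ?r)" using r by (intro divide_right_mono) auto
    finally show "sum ?w F \<le> 1 / (1 - ?r)" .
  qed
qed (use assms in simp)

lemma summable_on_strings:
  assumes "d < b"
  shows "(\<lambda>X. 1 / real b ^ length X) summable_on strings b d K"
proof -
  have "(\<lambda>X. (1/2) ^ count_list X d / real b ^ length X) summable_on strings b d K"
    by (rule summable_on_subset[OF summable_on_strings_weight[OF assms]]) (auto simp: strings_def)
  then have "(\<lambda>X. 2 ^ K * ((1/2) ^ count_list X d / real b ^ length X)) summable_on strings b d K"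
    by (rule summable_on_cmult_right)
  then show ?thesis
    by (rule summable_on_cong[THEN iffD1, rotated])
       (simp add: strings_def power_one_over[symmetric] power_mult_distrib[symmetric])
qed

section \<open>Expanding 1/(t+y) under an infinite sum\<close>

lemma has_sum_sum:
  fixes f :: "'i \<Rightarrow> 'a \<Rightarrow> 'b::topological_comm_monoid_add"
  assumes "finite I" "\<And>i. i \<in> I \<Longrightarrow> (f i has_sum s i) A"
  shows "((\<lambda>x. \<Sum>i\<in>I. f i x) has_sum (\<Sum>i\<in>I. s i)) A"
  using assms by (induction I rule: finite_induct) (auto intro: has_sum_add)

lemma alternating_geometric_sum:
  fixes t y :: real
  assumes "t > 0" "y \<ge> 0"
  shows "(\<Sum>j<N. (-1) ^ j * y ^ j / t ^ (j + 1)) = (1 - (- y / t) ^ N) / (t + y)"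
proof -
  have "(\<Sum>j<N. (-1) ^ j * y ^ j / t ^ (j + 1)) = (\<Sum>j<N. (- y / t) ^ j) / t"
    by (simp add: sum_divide_distrib power_minus' power_divide mult.commute)
  also have "\<dots> = (1 - (- y / t) ^ N) / (1 - (- y / t)) / t"
    using divide_nonneg_pos[OF assms(2,1)] by (subst sum_gp_strict) auto
  also have "\<dots> = (1 - (- y / t) ^ N) / (t + y)"
    using assms by (simp add: divide_divide_eq_left diff_divide_distrib[symmetric] add_divide_distrib ring_distribs)
  finally show ?thesis .
qed

lemma has_sum_alternating_moment_sum:
  fixes f y :: "'a \<Rightarrow> real" and t :: real
  assumes moment: "\<And>j. ((\<lambda>x. f x * y x ^ j) has_sum u j) A"
    and t: "t > 0" and y: "\<And>x. x \<in> A \<Longrightarrow> 0 \<le> y x"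
  shows "((\<lambda>x. f x * (1 - (- y x / t) ^ N) / (t + y x)) has_sum (\<Sum>j<N. (-1) ^ j / t ^ (j + 1) * u j)) A"
proof -
  have "((\<lambda>x. \<Sum>j<N. (-1) ^ j / t ^ (j + 1) * (f x * y x ^ j)) has_sum
      (\<Sum>j<N. (-1) ^ j / t ^ (j + 1) * u j)) A"
    by (intro has_sum_sum has_sum_cmult_right moment) simp
  moreover have "(\<Sum>j<N. (-1) ^ j / t ^ (j + 1) * (f x * y x ^ j))
      = f x * (1 - (- y x / t) ^ N) / (t + y x)" if "x \<in> A" for x
  proof -
    have "(\<Sum>j<N. (-1) ^ j / t ^ (j + 1) * (f x * y x ^ j))
        = f x * (\<Sum>j<N. (-1) ^ j * y x ^ j / t ^ (j + 1))"
      unfolding sum_distrib_left by (rule sum.cong) (simp_all add: mult.left_commute)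
    then show ?thesis using alternating_geometric_sum[OF t y[OF that], of N] by simp
  qed
  ultimately show ?thesis
    by (rule has_sum_cong[THEN iffD1, rotated])
qed

text \<open>Split off a finite set carrying all but \<open>\<epsilon>\<close> of the mass of \<open>f\<close>: on it every term tends
  to zero, and outside it the terms are dominated by \<open>f\<close>.\<close>
lemma infsum_mult_power_tendsto_zero:
  fixes f y :: "'a \<Rightarrow> real"
  assumes f: "f summable_on A" "\<And>x. x \<in> A \<Longrightarrow> 0 \<le> f x"
    and y: "\<And>x. x \<in> A \<Longrightarrow> 0 \<le> y x" "\<And>x. x \<in> A \<Longrightarrow> y x < 1"
  shows "(\<lambda>N. \<Sum>\<^sub>\<infinity>x\<in>A. f x * y x ^ N) \<longlonglongrightarrow> 0"
proof -
  have le: "0 \<le> f x * y x ^ N \<and> f x * y x ^ N \<le> f x" if "x \<in> A" for x N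
    using f(2)[OF that] y[OF that] by (auto intro!: mult_left_le power_le_one)
  have summable: "(\<lambda>x. f x * y x ^ N) summable_on B" if "B \<subseteq> A" for N B
    using summable_on_subset[OF f(1) that] le that
    by (auto intro: summable_on_comparison_test)
  show ?thesis
  proof (rule order_tendstoI)
    fix a :: real assume "a < 0"
    have "0 \<le> (\<Sum>\<^sub>\<infinity>x\<in>A. f x * y x ^ N)" for N
      using le by (simp add: infsum_nonneg)
    then show "\<forall>\<^sub>F N in sequentially. a < (\<Sum>\<^sub>\<infinity>x\<in>A. f x * y x ^ N)"
      using \<open>a < 0\<close> by (intro always_eventually allI) (rule less_le_trans)
  next
    fix \<epsilon> :: real assume "\<epsilon> > 0"
    obtain B where B: "finite B" "B \<subseteq> A" "dist (sum f B) (infsum f A) \<le> \<epsilon> / 2"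
      using infsum_finite_approximation[OF f(1), of "\<epsilon> / 2"] \<open>\<epsilon> > 0\<close> by auto
    have "infsum f (A - B) = infsum f A - sum f B"
      using infsum_Diff[OF f(1) _ B(2)] B(1) by simp
    then have tail: "infsum f (A - B) \<le> \<epsilon> / 2"
      using B(3) unfolding dist_real_def by linarith
    have "(\<lambda>N. \<Sum>x\<in>B. f x * y x ^ N) \<longlonglongrightarrow> (\<Sum>x\<in>B. f x * 0)"
      using B(2) y by (intro tendsto_sum tendsto_mult tendsto_const LIMSEQ_power_zero) auto
    then have "\<forall>\<^sub>F N in sequentially. (\<Sum>x\<in>B. f x * y x ^ N) < \<epsilon> / 2"
      using \<open>\<epsilon> > 0\<close> by (intro order_tendstoD(2)) auto
    then show "\<forall>\<^sub>F N in sequentially. (\<Sum>\<^sub>\<infinity>x\<in>A. f x * y x ^ N) < \<epsilon>"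
    proof eventually_elim
      case (elim N)
      have "(\<Sum>\<^sub>\<infinity>x\<in>A. f x * y x ^ N) = (\<Sum>x\<in>B. f x * y x ^ N) + (\<Sum>\<^sub>\<infinity>x\<in>A - B. f x * y x ^ N)"
        using infsum_Diff[OF summable summable B(2)] B by simp
      also have "(\<Sum>\<^sub>\<infinity>x\<in>A - B. f x * y x ^ N) \<le> infsum f (A - B)"
        using le summable_on_subset[OF f(1)] by (intro infsum_mono summable) auto
      finally show ?case using elim tail by linarith
    qed
  qed
qed

text \<open>The double series need not converge absolutely when \<open>t = 1\<close>, so instead of interchanging
  the sums, the remainder of the \<open>N\<close>-th partial sum is bounded by the \<open>N\<close>-th moment.\<close>
lemma moment_series_sums:
  fixes f y :: "'a \<Rightarrow> real" and t :: real
  assumes f: "f summable_on A" "\<And>x. x \<in> A \<Longrightarrow> 0 \<le> f x"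
    and y: "\<And>x. x \<in> A \<Longrightarrow> 0 \<le> y x" "\<And>x. x \<in> A \<Longrightarrow> y x < 1" and t: "t \<ge> 1"
  shows "(\<lambda>j. (-1) ^ j * (\<Sum>\<^sub>\<infinity>x\<in>A. f x * y x ^ j) / t ^ (j + 1)) sums (\<Sum>\<^sub>\<infinity>x\<in>A. f x / (t + y x))"
proof -
  define u where "u j = (\<Sum>\<^sub>\<infinity>x\<in>A. f x * y x ^ j)" for j
  define r where "r N x = f x * (- y x / t) ^ N / (t + y x)" for N x
  have summable_moment: "(\<lambda>x. f x * y x ^ j) summable_on A" for j
    using f y less_imp_le[OF y(2)]
    by (intro summable_on_comparison_test[OF f(1)]) (auto intro!: mult_left_le power_le_one)
  then have moment: "((\<lambda>x. f x * y x ^ j) has_sum u j) A" for j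
    unfolding u_def by (rule has_sum_infsum)
  have r_bound: "norm (r N x) \<le> f x * y x ^ N" if "x \<in> A" for N x
  proof -
    have "1 * 1 \<le> t ^ N * (t + y x)"
      using y(1)[OF that] t by (intro mult_mono one_le_power) auto
    moreover have "norm (r N x) = f x * y x ^ N / (t ^ N * (t + y x))"
      using f(2)[OF that] y(1)[OF that] t
      by (simp add: r_def abs_mult power_abs power_divide)
    ultimately show ?thesis
      using f(2)[OF that] y(1)[OF that] frac_le[of "f x * y x ^ N" _ 1] by simp
  qed
  have remainder: "(r N has_sum (\<Sum>\<^sub>\<infinity>x\<in>A. r N x)) A" for N
  proof (rule has_sum_infsum, rule summable_on_iff_abs_summable_on_real[THEN iffD2])
    show "(\<lambda>x. norm (r N x)) summable_on A"
      by (rule summable_on_comparison_test[OF summable_moment[of N]]) (simp_all add: r_bound[unfolded real_norm_def])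
  qed
  have partial_sums: "(\<Sum>j<N. (-1) ^ j / t ^ (j + 1) * u j)
      = (\<Sum>\<^sub>\<infinity>x\<in>A. f x / (t + y x)) - (\<Sum>\<^sub>\<infinity>x\<in>A. r N x)" for N
  proof -
    have "((\<lambda>x. f x * (1 - (- y x / t) ^ N) / (t + y x) + r N x) has_sum
        (\<Sum>j<N. (-1) ^ j / t ^ (j + 1) * u j) + (\<Sum>\<^sub>\<infinity>x\<in>A. r N x)) A"
      by (rule has_sum_add[OF has_sum_alternating_moment_sum[OF moment _ y(1)] remainder]) (use t in simp)
    then have "(\<Sum>\<^sub>\<infinity>x\<in>A. f x * (1 - (- y x / t) ^ N) / (t + y x) + r N x)
        = (\<Sum>j<N. (-1) ^ j / t ^ (j + 1) * u j) + (\<Sum>\<^sub>\<infinity>x\<in>A. r N x)"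
      by (rule infsumI)
    moreover have "(\<Sum>\<^sub>\<infinity>x\<in>A. f x * (1 - (- y x / t) ^ N) / (t + y x) + r N x)
        = (\<Sum>\<^sub>\<infinity>x\<in>A. f x / (t + y x))"
      by (rule infsum_cong) (simp add: r_def right_diff_distrib diff_divide_distrib)
    ultimately show ?thesis by simp
  qed
  have "(\<lambda>N. \<Sum>\<^sub>\<infinity>x\<in>A. r N x) \<longlonglongrightarrow> 0"
  proof (rule Lim_null_comparison)
    show "\<forall>\<^sub>F N in sequentially. norm (\<Sum>\<^sub>\<infinity>x\<in>A. r N x) \<le> u N"
      using norm_infsum_le[OF remainder moment] r_bound by (simp add: always_eventually)
    show "u \<longlonglongrightarrow> 0"
      unfolding u_def by (rule infsum_mult_power_tendsto_zero[OF f y])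
  qed
  then have "(\<lambda>N. \<Sum>j<N. (-1) ^ j / t ^ (j + 1) * u j) \<longlonglongrightarrow> (\<Sum>\<^sub>\<infinity>x\<in>A. f x / (t + y x)) - 0"
    unfolding partial_sums by (intro tendsto_diff tendsto_const)
  then show ?thesis
    by (simp add: sums_def u_def)
qed

theorem mainTheorem6:
  fixes b d k n :: nat
  assumes "b \<ge> 2" and "d < b" and "n > 0" and "kcount b d n \<le> k"
  shows "(\<lambda>j. (-1) ^ j * umom b d (k - kcount b d n) j / real n ^ (j + 1)) sums
           (\<Sum>\<^sub>\<infinity> m \<in> {m. m > 0 \<and> blen b m \<ge> blen b n \<and> ld b (blen b n) m = n
                                 \<and> kcount b d m = k}. 1 / real m)"
proof -
  let ?S = "strings b d (k - kcount b d n)"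
  let ?F = "\<lambda>X. 1 / real b ^ length X"
  let ?x = "\<lambda>X. real (strval b X) / real b ^ length X"
  have x_bounds: "0 \<le> ?x X \<and> ?x X < 1" if "X \<in> ?S" for X
    using strval_less[of X b] that assms(1)
    by (simp add: strings_def divide_less_eq flip: of_nat_power)
  have "(\<lambda>j. (-1) ^ j * umom b d (k - kcount b d n) j / real n ^ (j + 1)) sums
      (\<Sum>\<^sub>\<infinity>X\<in>?S. ?F X / (real n + ?x X))"
    unfolding umom_def
    using moment_series_sums[OF summable_on_strings[OF assms(2)], where y = ?x and t = "real n"] x_bounds assms(3)
    by simp
  also have "(\<Sum>\<^sub>\<infinity>X\<in>?S. ?F X / (real n + ?x X)) = (\<Sum>\<^sub>\<infinity>m\<in>append_digits b n ` ?S. 1 / real m)"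
    using inj_on_append_digits[OF assms(1,3)] real_append_digits[of b n] assms(1)
    by (subst infsum_reindex) (auto simp: strings_def intro: inj_on_subset intro!: infsum_cong)
  also have "append_digits b n ` ?S
      = {m. m > 0 \<and> blen b m \<ge> blen b n \<and> ld b (blen b n) m = n \<and> kcount b d m = k}"
    by (rule append_digits_image[OF assms(1,3,4)])
  finally show ?thesis .
qed

end
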